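(* Let $T$ be a nontrivial tree of order $n(T)$ with $l(T)$ leaves and $s(T)$ support vertices. Then $\gamma^{d}_2(T)\leq \frac{n(T)+3s(T)-l(T)}{4}$.
   Context: A leaf is a vertex of degree $1$; a support vertex is a vertex adjacent to a leaf. For a tree $T$, $n(T)$, $l(T)$, $s(T)$ denote its order, number of leaves and number of support vertices. A set $D\subseteq V(G)$ is a disjunctive dominating set of $G$ if every vertex $v\notin D$ either has a neighbor in $D$ or has at least two vertices of $D$ at distance exactly $2$ from it. $\gamma^{d}_2(G)$ is the minimum size of such a set. *)

theory Defs
  imports Complex_Main
begin

definition graph :: "'a set \<Rightarrow> 'a set set \<Rightarrow> bool" where
  "graph V E \<longleftrightarrow> finite V \<and> (\<forall>e\<in>E. e \<subseteq> V \<and> card e = 2)"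

definition adj :: "'a set set \<Rightarrow> 'a \<Rightarrow> 'a \<Rightarrow> bool" where
  "adj E u v \<longleftrightarrow> {u, v} \<in> E"

definition walk :: "'a set \<Rightarrow> 'a set set \<Rightarrow> 'a list \<Rightarrow> bool" where
  "walk V E p \<longleftrightarrow> p \<noteq> [] \<and> set p \<subseteq> V \<and>
     (\<forall>i. Suc i < length p \<longrightarrow> adj E (p ! i) (p ! Suc i))"

definition connected :: "'a set \<Rightarrow> 'a set set \<Rightarrow> bool" where
  "connected V E \<longleftrightarrow> (\<forall>u\<in>V. \<forall>v\<in>V. \<exists>p. walk V E p \<and> hd p = u \<and> last p = v)"

definition has_cycle :: "'a set \<Rightarrow> 'a set set \<Rightarrow> bool" where
  "has_cycle V E \<longleftrightarrow> (\<exists>p. walk V E p \<and> length p \<ge> 3 \<and> distinct p \<and> adj E (last p) (hd p))"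

definition tree :: "'a set \<Rightarrow> 'a set set \<Rightarrow> bool" where
  "tree V E \<longleftrightarrow> graph V E \<and> V \<noteq> {} \<and> connected V E \<and> \<not> has_cycle V E"

definition degree :: "'a set set \<Rightarrow> 'a \<Rightarrow> nat" where
  "degree E v = card {u. adj E v u}"

definition leaves :: "'a set \<Rightarrow> 'a set set \<Rightarrow> 'a set" where
  "leaves V E = {v\<in>V. degree E v = 1}"

definition support_vertices :: "'a set \<Rightarrow> 'a set set \<Rightarrow> 'a set" where
  "support_vertices V E = {v\<in>V. \<exists>u\<in>leaves V E. adj E v u}"

text \<open>Distance: number of edges of a shortest walk (defined for connected graphs).\<close>
definition dist :: "'a set \<Rightarrow> 'a set set \<Rightarrow> 'a \<Rightarrow> 'a \<Rightarrow> nat" where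
  "dist V E u v = (LEAST k. \<exists>p. walk V E p \<and> hd p = u \<and> last p = v \<and> length p = Suc k)"

definition disj_dom_set :: "'a set \<Rightarrow> 'a set set \<Rightarrow> 'a set \<Rightarrow> bool" where
  "disj_dom_set V E D \<longleftrightarrow> D \<subseteq> V \<and>
     (\<forall>v\<in>V - D. (\<exists>u\<in>D. adj E v u) \<or> 2 \<le> card {u\<in>D. dist V E v u = 2})"

definition disj_dom_number :: "'a set \<Rightarrow> 'a set set \<Rightarrow> nat" where
  "disj_dom_number V E = (LEAST k. \<exists>D. disj_dom_set V E D \<and> card D = k)"

end

theory Submission
  imports Defs
begin

text \<open>Root the tree at a support vertex \<open>r\<close>. For a residue \<open>c\<close> modulo 4, the support vertices
  together with the non-leaf vertices whose distance to \<open>r\<close> is congruent to \<open>c\<close> form a disjunctive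
  dominating set: a leaf is adjacent to a support vertex, and a non-leaf vertex outside the set
  either has its parent or a child in the set, or else both its grandparent and a grandchild lie in
  the set, at distance exactly 2. The non-leaf vertices that are not support vertices fall into four
  residue classes, so one of them contains at most a quarter of these \<open>n - l - s\<close> vertices (leaves
  and support vertices being disjoint once \<open>n \<ge> 3\<close>), whence \<open>\<gamma> \<le> s + (n - l - s) / 4\<close>.\<close>

lemma adj_commute: "adj E u v \<longleftrightarrow> adj E v u"
  unfolding adj_def by (simp add: insert_commute)

lemma walk_iff_successively:
  "walk V E p \<longleftrightarrow> p \<noteq> [] \<and> set p \<subseteq> V \<and> successively (adj E) p"
  unfolding walk_def successively_conv_nth by auto

lemma walk_append_tl: "walk V E p \<Longrightarrow> walk V E q \<Longrightarrow> last p = hd q \<Longrightarrow> walk V E (p @ tl q)"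
  unfolding walk_iff_successively
  by (cases q) (auto simp: successively_append_iff successively_Cons)

lemma walk_rev: "walk V E p \<Longrightarrow> walk V E (rev p)"
  unfolding walk_iff_successively by (simp add: adj_commute)

lemma walk_take: "walk V E p \<Longrightarrow> i < length p \<Longrightarrow> walk V E (take (Suc i) p)"
  unfolding walk_def by (auto dest: in_set_takeD)

lemma walk_imp_distinct_walk:
  "walk V E p \<Longrightarrow> \<exists>q. walk V E q \<and> distinct q \<and> hd q = hd p \<and> last q = last p \<and> set q \<subseteq> set p"
proof (induction "length p" arbitrary: p rule: less_induct)
  case less
  show ?case
  proof (cases "distinct p")
    case True
    then show ?thesis using less.prems by blast
  next
    case False
    then obtain xs ys zs y where p: "p = xs @ [y] @ ys @ [y] @ zs"
      using not_distinct_decomp by blast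
    let ?p' = "xs @ [y] @ zs"
    have "walk V E ?p'"
      using less.prems unfolding p walk_iff_successively
      by (auto simp: successively_append_iff successively_Cons)
    moreover have "length ?p' < length p" using p by simp
    moreover have "hd ?p' = hd p" "last ?p' = last p" "set ?p' \<subseteq> set p"
      using p by (cases xs; cases zs; auto)+
    ultimately show ?thesis using less.hyps by fastforce
  qed
qed

lemma walk_closed_subset:
  assumes closed: "\<And>x y. x \<in> C \<Longrightarrow> adj E x y \<Longrightarrow> y \<in> C"
  shows "walk V E p \<Longrightarrow> hd p \<in> C \<Longrightarrow> set p \<subseteq> C"
  unfolding walk_iff_successively
  by (induction p rule: induct_list012) (auto intro: closed)

lemma mod_4_cases:
  fixes k c :: nat
  assumes "k mod 4 \<noteq> c" "c < 4"
  obtains "(k + 3) mod 4 = c" | "(k + 1) mod 4 = c" | "(k + 2) mod 4 = c"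
proof -
  have shift: "(k + j) mod 4 = (k mod 4 + j) mod 4" for j by (simp add: mod_add_left_eq)
  have "k mod 4 < 4" by simp
  then consider "k mod 4 = 0" | "k mod 4 = 1" | "k mod 4 = 2" | "k mod 4 = 3" by linarith
  then have "(k + 3) mod 4 = c \<or> (k + 1) mod 4 = c \<or> (k + 2) mod 4 = c"
    unfolding shift using assms by cases auto
  then show thesis using that by blast
qed

lemma disj_dom_number_le_card: "disj_dom_set V E D \<Longrightarrow> disj_dom_number V E \<le> card D"
  unfolding disj_dom_number_def by (rule Least_le) blast

lemma exists_small_residue_class:
  fixes f :: "'a \<Rightarrow> nat"
  assumes "finite A" "0 < m"
  shows "\<exists>c<m. m * card {x \<in> A. f x mod m = c} \<le> card A"
proof (rule ccontr)
  assume "\<not> ?thesis"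
  then have "(\<Sum>c<m. card A) < (\<Sum>c<m. m * card {x \<in> A. f x mod m = c})"
    using \<open>0 < m\<close> by (intro sum_strict_mono) auto
  also have "\<dots> = m * (\<Sum>c<m. card {x \<in> A. f x mod m = c})"
    by (simp add: sum_distrib_left)
  also have "(\<Sum>c<m. card {x \<in> A. f x mod m = c}) = (\<Sum>x\<in>A. 1)"
  proof (rule sum_multicount_gen)
    have "{c \<in> {..<m}. f x mod m = c} = {f x mod m}" for x
      using \<open>0 < m\<close> by auto
    then show "\<forall>x\<in>A. card {c \<in> {..<m}. f x mod m = c} = 1" by simp
  qed (use \<open>finite A\<close> in auto)
  finally show False by simp
qed

locale nontrivial_tree =
  fixes V :: "'a set" and E :: "'a set set"
  assumes tree: "tree V E" and two_le_card: "2 \<le> card V"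
begin

lemma finite_V: "finite V"
  using tree unfolding tree_def graph_def by auto

lemma adj_vertices:
  assumes "adj E u v"
  shows "u \<in> V" "v \<in> V" "u \<noteq> v"
proof -
  have "{u, v} \<subseteq> V" "card {u, v} = 2"
    using assms tree unfolding tree_def graph_def adj_def by auto
  then show "u \<in> V" "v \<in> V" "u \<noteq> v" by auto
qed

lemma finite_neighbours: "finite {u. adj E v u}"
  by (rule finite_subset[OF _ finite_V]) (auto dest: adj_vertices)

lemma exists_walk: "u \<in> V \<Longrightarrow> v \<in> V \<Longrightarrow> \<exists>p. walk V E p \<and> hd p = u \<and> last p = v"
  using tree unfolding tree_def connected_def by auto

lemma exists_neighbour:
  assumes "v \<in> V"
  obtains u where "adj E v u"
proof -
  have "V \<noteq> {v}" using two_le_card by auto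
  then obtain z where "z \<in> V" "z \<noteq> v" using assms by blast
  then obtain p where p: "walk V E p" "hd p = v" "last p = z"
    using exists_walk assms by blast
  then have "Suc 0 < length p"
    using \<open>z \<noteq> v\<close> unfolding walk_def by (cases p) (auto simp: Suc_lessI)
  then have "adj E (p ! 0) (p ! 1)" using p unfolding walk_def by auto
  moreover have "p ! 0 = v" using p unfolding walk_def by (cases p) auto
  ultimately show thesis using that by auto
qed

lemma not_leaf_iff_two_neighbours:
  assumes "v \<in> V"
  shows "v \<notin> leaves V E \<longleftrightarrow> (\<exists>a b. a \<noteq> b \<and> adj E v a \<and> adj E v b)"
proof -
  have "{u. adj E v u} \<noteq> {}" using exists_neighbour[OF assms] by blast
  then have "card {u. adj E v u} \<noteq> 0" using finite_neighbours by simp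
  then have "degree E v \<noteq> 1 \<longleftrightarrow> \<not> card {u. adj E v u} \<le> Suc 0"
    unfolding degree_def by linarith
  then show ?thesis
    using assms unfolding leaves_def by (auto simp: card_le_Suc0_iff_eq[OF finite_neighbours])
qed

lemma adj_leaf_imp_support_vertex: "adj E v w \<Longrightarrow> w \<in> leaves V E \<Longrightarrow> v \<in> support_vertices V E"
  unfolding support_vertices_def using adj_vertices by blast

lemma dist_shortest_walk:
  assumes "r \<in> V" "v \<in> V"
  obtains p where "walk V E p" "hd p = r" "last p = v" "length p = Suc (dist V E r v)"
proof -
  obtain p where p: "walk V E p" "hd p = r" "last p = v" using exists_walk assms by blast
  then have "length p = Suc (length p - 1)" unfolding walk_def by (cases p) auto
  then have "\<exists>k p. walk V E p \<and> hd p = r \<and> last p = v \<and> length p = Suc k" using p by blast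
  then have "\<exists>p. walk V E p \<and> hd p = r \<and> last p = v \<and> length p = Suc (dist V E r v)"
    unfolding dist_def by (rule LeastI_ex)
  then show thesis using that by blast
qed

lemma dist_le_walk_length:
  assumes "walk V E p" "hd p = r" "last p = v"
  shows "Suc (dist V E r v) \<le> length p"
proof -
  have "length p = Suc (length p - 1)" using assms unfolding walk_def by (cases p) auto
  then have "dist V E r v \<le> length p - 1"
    unfolding dist_def by (intro Least_le) (use assms in metis)
  then show ?thesis using \<open>length p = _\<close> by linarith
qed

lemma dist_le_index:
  assumes "walk V E p" "hd p = r" "i < length p"
  shows "dist V E r (p ! i) \<le> i"
proof -
  have "Suc (dist V E r (p ! i)) \<le> length (take (Suc i) p)"
  proof (rule dist_le_walk_length)
    show "walk V E (take (Suc i) p)" using walk_take assms by blast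
    show "hd (take (Suc i) p) = r" using assms by (cases p) auto
    show "last (take (Suc i) p) = p ! i" using assms by (simp add: take_Suc_conv_app_nth)
  qed
  then show ?thesis using assms by simp
qed

lemma dist_adj_le:
  assumes "r \<in> V" "adj E u v"
  shows "dist V E r v \<le> Suc (dist V E r u)"
proof -
  have uv: "u \<in> V" "v \<in> V" using adj_vertices assms by auto
  obtain p where p: "walk V E p" "hd p = r" "last p = u" "length p = Suc (dist V E r u)"
    using dist_shortest_walk assms uv by blast
  have "walk V E (p @ [v])"
    using p assms uv unfolding walk_iff_successively by (auto simp: successively_append_iff)
  moreover have "hd (p @ [v]) = r" using p unfolding walk_def by simp
  ultimately have "Suc (dist V E r v) \<le> length (p @ [v])" using dist_le_walk_length by fastforce
  then show ?thesis using p by simp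
qed

lemma dist_eq_0_imp_eq:
  assumes "r \<in> V" "v \<in> V" "dist V E r v = 0"
  shows "v = r"
proof -
  obtain p where "walk V E p" "hd p = r" "last p = v" "length p = Suc 0"
    using dist_shortest_walk assms by metis
  then show ?thesis by (cases p) auto
qed

lemma exists_parent:
  assumes "r \<in> V" "v \<in> V" "v \<noteq> r"
  obtains u where "adj E u v" "Suc (dist V E r u) = dist V E r v"
proof -
  obtain p where p: "walk V E p" "hd p = r" "last p = v" "length p = Suc (dist V E r v)"
    using dist_shortest_walk assms by blast
  obtain k where k: "dist V E r v = Suc k"
    using dist_eq_0_imp_eq assms by (cases "dist V E r v") auto
  have a: "adj E (p ! k) v" using p k unfolding walk_def by (auto simp: last_conv_nth)
  moreover have "dist V E r (p ! k) \<le> k" using dist_le_index p k by simp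
  moreover have "dist V E r v \<le> Suc (dist V E r (p ! k))" using dist_adj_le[OF assms(1) a] .
  ultimately show thesis using that k by auto
qed

subsection \<open>Rooted structure of a tree\<close>

lemma eq_if_joined_avoiding_common_neighbour:
  assumes va: "adj E v a" and vb: "adj E v b"
    and p: "walk V E p" "hd p = a" "last p = b" "v \<notin> set p"
  shows "a = b"
proof (rule ccontr)
  assume "a \<noteq> b"
  have "walk (V - {v}) E p" using p unfolding walk_def by auto
  then obtain q where q: "walk (V - {v}) E q" "distinct q" "hd q = a" "last q = b"
    using walk_imp_distinct_walk p by metis
  have "q \<noteq> []" using q unfolding walk_def by auto
  then have "2 \<le> length q" using q \<open>a \<noteq> b\<close> by (cases q) (auto simp: Suc_le_eq)
  moreover have "walk V E (v # q)"
    using q va adj_vertices(1)[OF va] unfolding walk_iff_successively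
    by (auto simp: successively_Cons)
  moreover have "distinct (v # q)" using q unfolding walk_def by auto
  moreover have "adj E (last (v # q)) (hd (v # q))"
    using q \<open>q \<noteq> []\<close> vb by (simp add: adj_commute)
  ultimately have "has_cycle V E"
    unfolding has_cycle_def by (intro exI[of _ "v # q"]) auto
  then show False using tree unfolding tree_def by auto
qed

lemma not_mem_shortest_walk:
  assumes "walk V E p" "hd p = r" "last p = a" "length p = Suc (dist V E r a)"
    and "dist V E r a \<le> dist V E r v" "v \<noteq> a"
  shows "v \<notin> set p"
proof
  assume "v \<in> set p"
  then obtain i where i: "i < length p" "p ! i = v" by (auto simp: in_set_conv_nth)
  have "dist V E r v \<le> i" using dist_le_index[OF assms(1,2) i(1)] i by simp
  then have "i = length p - 1" using i assms by linarith
  moreover have "p \<noteq> []" using i by auto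
  ultimately have "p ! i = a" using assms(3) by (simp add: last_conv_nth)
  then show False using i assms by simp
qed

text \<open>Two shortest walks from the root, glued at the root, would join two neighbours of \<open>v\<close>
  without passing through \<open>v\<close>.\<close>

lemma unique_neighbour_not_farther:
  assumes r: "r \<in> V" and va: "adj E v a" and vb: "adj E v b"
    and da: "dist V E r a \<le> dist V E r v" and db: "dist V E r b \<le> dist V E r v"
  shows "a = b"
proof -
  have V: "v \<in> V" "a \<in> V" "b \<in> V" "v \<noteq> a" "v \<noteq> b" using adj_vertices va vb by auto
  obtain pa where pa: "walk V E pa" "hd pa = r" "last pa = a" "length pa = Suc (dist V E r a)"
    using dist_shortest_walk r V by blast
  obtain pb where pb: "walk V E pb" "hd pb = r" "last pb = b" "length pb = Suc (dist V E r b)"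
    using dist_shortest_walk r V by blast
  have ne: "pa \<noteq> []" "pb \<noteq> []" using pa pb by auto
  show ?thesis
  proof (rule eq_if_joined_avoiding_common_neighbour[OF va vb])
    show "walk V E (rev pa @ tl pb)"
      by (rule walk_append_tl) (use walk_rev pa pb ne in \<open>auto simp: last_rev\<close>)
    show "hd (rev pa @ tl pb) = a" using pa ne by (simp add: hd_rev)
    show "last (rev pa @ tl pb) = b"
      using pa pb ne by (cases pb) (auto simp: last_rev)
    show "v \<notin> set (rev pa @ tl pb)"
      using not_mem_shortest_walk[OF pa da] not_mem_shortest_walk[OF pb db] V
      by (cases pb) auto
  qed
qed

lemma exists_child:
  assumes "r \<in> V" "v \<in> V" "v \<notin> leaves V E"
  obtains w where "adj E v w" "dist V E r w = Suc (dist V E r v)"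
proof -
  obtain a b where ab: "a \<noteq> b" "adj E v a" "adj E v b"
    using not_leaf_iff_two_neighbours assms by blast
  have "\<not> (dist V E r a \<le> dist V E r v \<and> dist V E r b \<le> dist V E r v)"
    using unique_neighbour_not_farther[OF assms(1) ab(2,3)] ab by auto
  moreover have "dist V E r a \<le> Suc (dist V E r v)" "dist V E r b \<le> Suc (dist V E r v)"
    using dist_adj_le assms ab by auto
  ultimately have "dist V E r a = Suc (dist V E r v) \<or> dist V E r b = Suc (dist V E r v)"
    by linarith
  then show thesis using that ab by blast
qed

text \<open>A vertex farthest from an arbitrary vertex is a leaf; its neighbour is a support vertex.\<close>

lemma exists_support_vertex: "\<exists>r. r \<in> support_vertices V E"
proof -
  have "V \<noteq> {}" using two_le_card by auto
  then obtain r0 where r0: "r0 \<in> V" by blast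
  have "Max (dist V E r0 ` V) \<in> dist V E r0 ` V" using finite_V \<open>V \<noteq> {}\<close> by simp
  then obtain v where v: "v \<in> V" "dist V E r0 v = Max (dist V E r0 ` V)" by (metis imageE)
  have "v \<in> leaves V E"
  proof (rule ccontr)
    assume "v \<notin> leaves V E"
    then obtain w where w: "adj E v w" "dist V E r0 w = Suc (dist V E r0 v)"
      using exists_child r0 v by blast
    have "dist V E r0 w \<le> Max (dist V E r0 ` V)"
      using adj_vertices(2)[OF w(1)] finite_V by (intro Max_ge) auto
    then show False using w v by simp
  qed
  moreover obtain u where "adj E v u" using exists_neighbour v by blast
  ultimately show ?thesis
    using adj_leaf_imp_support_vertex adj_commute by metis
qed

lemma dist_eq_2:
  assumes "adj E a b" "adj E b c" "a \<noteq> c" "\<not> adj E a c"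
  shows "dist V E a c = 2"
  unfolding dist_def
proof (rule Least_equality)
  have "walk V E [a, b, c]"
    using assms adj_vertices unfolding walk_iff_successively by auto
  then show "\<exists>p. walk V E p \<and> hd p = a \<and> last p = c \<and> length p = Suc 2" by fastforce
next
  fix k assume "\<exists>p. walk V E p \<and> hd p = a \<and> last p = c \<and> length p = Suc k"
  then obtain p where p: "walk V E p" "hd p = a" "last p = c" "length p = Suc k" by blast
  show "2 \<le> k"
  proof (rule ccontr)
    assume "\<not> 2 \<le> k"
    then consider "k = 0" | "k = 1" by linarith
    then show False
    proof cases
      case 1
      then obtain x where "p = [x]" using p(4) by (metis length_0_conv length_Suc_conv)
      then show False using p assms by simp
    next
      case 2
      then obtain x y where "p = [x, y]"
        using p(4) by (metis One_nat_def length_0_conv length_Suc_conv)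
      then show False using p assms unfolding walk_iff_successively by simp
    qed
  qed
qed

lemma dist_eq_2_if_levels_differ_by_2:
  assumes r: "r \<in> V" and ab: "adj E a b" and bc: "adj E b c"
    and levels: "dist V E r c = dist V E r a + 2 \<or> dist V E r a = dist V E r c + 2"
  shows "dist V E a c = 2"
proof (rule dist_eq_2[OF ab bc])
  show "a \<noteq> c" using levels by auto
  show "\<not> adj E a c"
    using dist_adj_le[OF r, of a c] dist_adj_le[OF r, of c a] levels adj_commute by fastforce
qed

lemma leaf_neighbours:
  assumes "v \<in> leaves V E" "adj E v u"
  shows "{x. adj E v x} = {u}"
proof -
  have "card {x. adj E v x} = 1" using assms unfolding leaves_def degree_def by blast
  then obtain z where "{x. adj E v x} = {z}" using card_1_singletonE by blast
  then show ?thesis using assms by auto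
qed

text \<open>Two adjacent leaves form a component of their own.\<close>

lemma leaves_Int_support_vertices:
  assumes "3 \<le> card V"
  shows "leaves V E \<inter> support_vertices V E = {}"
proof (rule ccontr)
  assume "leaves V E \<inter> support_vertices V E \<noteq> {}"
  then obtain u v where u: "u \<in> leaves V E" and v: "v \<in> leaves V E" and uv: "adj E u v"
    unfolding support_vertices_def by blast
  have closed: "y \<in> {u, v}" if "x \<in> {u, v}" "adj E x y" for x y
    using that leaf_neighbours[OF u uv] leaf_neighbours[OF v adj_commute[THEN iffD1, OF uv]] by auto
  have "\<not> V \<subseteq> {u, v}"
  proof
    assume "V \<subseteq> {u, v}"
    then have "card V \<le> card {u, v}" by (rule card_mono[rotated]) simp
    also have "\<dots> \<le> 2" by (simp add: card_insert_if)
    finally show False using assms by simp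
  qed
  then obtain z where z: "z \<in> V" "z \<notin> {u, v}" by blast
  obtain p where p: "walk V E p" "hd p = u" "last p = z"
    using exists_walk z adj_vertices(1)[OF uv] by blast
  then have "set p \<subseteq> {u, v}" using walk_closed_subset[of "{u, v}" E] closed by blast
  moreover have "z \<in> set p" using p unfolding walk_def by auto
  ultimately show False using z by blast
qed

subsection \<open>A dominating set for each residue modulo 4\<close>

definition residue_dom_set :: "'a \<Rightarrow> nat \<Rightarrow> 'a set" where
  "residue_dom_set r c =
     support_vertices V E \<union> {v \<in> V. v \<notin> leaves V E \<and> dist V E r v mod 4 = c}"

lemma residue_dom_set_subset: "residue_dom_set r c \<subseteq> V"
  unfolding residue_dom_set_def support_vertices_def by blast

lemma has_child_mem_residue_dom_set:
  assumes r: "r \<in> support_vertices V E" and xy: "adj E x y"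
    and child: "dist V E r y = Suc (dist V E r x)" and "dist V E r x mod 4 = c"
  shows "x \<in> residue_dom_set r c"
proof (cases "x = r")
  case True
  then show ?thesis using r unfolding residue_dom_set_def by blast
next
  case False
  have rV: "r \<in> V" and xV: "x \<in> V"
    using r adj_vertices(1)[OF xy] unfolding support_vertices_def by auto
  obtain q where q: "adj E q x" "Suc (dist V E r q) = dist V E r x"
    using exists_parent[OF rV xV False] by blast
  then have "q \<noteq> y" using child by auto
  then have "x \<notin> leaves V E"
    using not_leaf_iff_two_neighbours[OF xV] adj_commute[THEN iffD1, OF q(1)] xy by blast
  then show ?thesis using xV \<open>dist V E r x mod 4 = c\<close> unfolding residue_dom_set_def by blast
qed

text \<open>The case where neither the parent \<open>p\<close> nor the child \<open>w\<close> of \<open>v\<close> lies in the set.\<close>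

lemma two_at_dist_2_in_residue_dom_set:
  assumes r: "r \<in> support_vertices V E" and "p \<noteq> r"
    and pv: "adj E p v" "Suc (dist V E r p) = dist V E r v" and "v \<notin> support_vertices V E"
    and vw: "adj E v w" "dist V E r w = Suc (dist V E r v)" "w \<notin> support_vertices V E"
    and c: "(dist V E r v + 2) mod 4 = c"
  shows "2 \<le> card {u \<in> residue_dom_set r c. dist V E v u = 2}"
proof -
  have rV: "r \<in> V" using r unfolding support_vertices_def by blast
  have pV: "p \<in> V" and wV: "w \<in> V" using adj_vertices pv vw by auto
  obtain g where g: "adj E g p" "Suc (dist V E r g) = dist V E r p"
    using exists_parent[OF rV pV \<open>p \<noteq> r\<close>] by blast
  have "w \<notin> leaves V E" using adj_leaf_imp_support_vertex vw(1) \<open>v \<notin> _\<close> by blast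
  then obtain x where x: "adj E w x" "dist V E r x = Suc (dist V E r w)"
    using exists_child rV wV by blast
  have "x \<notin> leaves V E" using adj_leaf_imp_support_vertex x(1) vw(3) by blast
  then have "x \<in> residue_dom_set r c"
    using adj_vertices(2)[OF x(1)] x(2) vw(2) c unfolding residue_dom_set_def by simp
  moreover have "g \<in> residue_dom_set r c"
  proof (rule has_child_mem_residue_dom_set[OF r g(1)])
    show "dist V E r p = Suc (dist V E r g)" using g by simp
    show "dist V E r g mod 4 = c" using c[folded pv(2) g(2)] by simp
  qed
  moreover have "dist V E v x = 2"
    using dist_eq_2_if_levels_differ_by_2[OF rV vw(1) x(1)] x(2) vw(2) by simp
  moreover have "dist V E v g = 2"
    using dist_eq_2_if_levels_differ_by_2[OF rV adj_commute[THEN iffD1, OF pv(1)]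
        adj_commute[THEN iffD1, OF g(1)]] pv(2) g(2) by simp
  moreover have "x \<noteq> g" using x vw pv g by auto
  ultimately have "{x, g} \<subseteq> {u \<in> residue_dom_set r c. dist V E v u = 2}" by blast
  moreover have "finite {u \<in> residue_dom_set r c. dist V E v u = 2}"
    using finite_subset[OF residue_dom_set_subset finite_V] by simp
  ultimately have "card {x, g} \<le> card {u \<in> residue_dom_set r c. dist V E v u = 2}"
    by (intro card_mono)
  then show ?thesis using \<open>x \<noteq> g\<close> by simp
qed

lemma disj_dom_set_residue_dom_set:
  assumes r: "r \<in> support_vertices V E" and "c < 4"
  shows "disj_dom_set V E (residue_dom_set r c)"
  unfolding disj_dom_set_def
proof (intro conjI ballI residue_dom_set_subset)
  fix v assume "v \<in> V - residue_dom_set r c"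
  then have v: "v \<in> V" "v \<notin> residue_dom_set r c" by auto
  have rV: "r \<in> V" using r unfolding support_vertices_def by blast
  obtain u where vu: "adj E v u" using exists_neighbour v by blast
  show "(\<exists>u\<in>residue_dom_set r c. adj E v u) \<or> 2 \<le> card {u \<in> residue_dom_set r c. dist V E v u = 2}"
  proof (cases "v \<in> leaves V E")
    case True
    then have "u \<in> support_vertices V E"
      using adj_leaf_imp_support_vertex adj_commute[THEN iffD1, OF vu] by blast
    then show ?thesis using vu unfolding residue_dom_set_def by blast
  next
    case False
    have vS: "v \<notin> support_vertices V E" and "v \<noteq> r" and vc: "dist V E r v mod 4 \<noteq> c"
      using v False r unfolding residue_dom_set_def by auto
    obtain p where p: "adj E p v" "Suc (dist V E r p) = dist V E r v"
      using exists_parent[OF rV v(1) \<open>v \<noteq> r\<close>] by blast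
    obtain w where w: "adj E v w" "dist V E r w = Suc (dist V E r v)"
      using exists_child[OF rV v(1) False] by blast
    show ?thesis
    proof (cases rule: mod_4_cases[OF vc \<open>c < 4\<close>])
      case 1
      have "dist V E r p mod 4 = c" using 1[folded p(2)] by simp
      then have "p \<in> residue_dom_set r c"
        by (rule has_child_mem_residue_dom_set[OF r p(1) p(2)[symmetric]])
      then show ?thesis using adj_commute[THEN iffD1, OF p(1)] by blast
    next
      case 2
      moreover have "w \<notin> leaves V E" using adj_leaf_imp_support_vertex w(1) vS by blast
      ultimately have "w \<in> residue_dom_set r c"
        using adj_vertices(2)[OF w(1)] w(2) unfolding residue_dom_set_def by simp
      then show ?thesis using w(1) by blast
    next
      case 3
      show ?thesis
      proof (cases "w \<in> support_vertices V E \<or> p = r")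
        case True
        then have "w \<in> residue_dom_set r c \<or> p \<in> residue_dom_set r c"
          using r unfolding residue_dom_set_def by blast
        then show ?thesis using w(1) adj_commute[THEN iffD1, OF p(1)] by blast
      next
        case False
        then show ?thesis using two_at_dist_2_in_residue_dom_set[OF r _ p vS w _ 3] by blast
      qed
    qed
  qed
qed

lemma four_disj_dom_number_le_if_3_le_card:
  assumes "3 \<le> card V"
  shows "4 * disj_dom_number V E + card (leaves V E) \<le> card V + 3 * card (support_vertices V E)"
proof -
  define L where "L = leaves V E"
  define S where "S = support_vertices V E"
  define A where "A = V - (L \<union> S)"
  have finite: "finite L" "finite S" "finite A" "L \<union> S \<subseteq> V"
    using finite_V unfolding L_def S_def A_def leaves_def support_vertices_def by auto
  obtain r where r: "r \<in> S" using exists_support_vertex unfolding S_def by blast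
  obtain c where c: "c < 4" "4 * card {x \<in> A. dist V E r x mod 4 = c} \<le> card A"
    using exists_small_residue_class[OF \<open>finite A\<close>, of 4] by auto
  have "residue_dom_set r c = S \<union> {x \<in> A. dist V E r x mod 4 = c}"
    unfolding residue_dom_set_def A_def S_def L_def by auto
  then have "disj_dom_number V E \<le> card (S \<union> {x \<in> A. dist V E r x mod 4 = c})"
    using disj_dom_number_le_card[OF disj_dom_set_residue_dom_set[OF r[unfolded S_def] c(1)]]
    by simp
  also have "\<dots> \<le> card S + card {x \<in> A. dist V E r x mod 4 = c}" by (rule card_Un_le)
  finally have "disj_dom_number V E \<le> card S + card {x \<in> A. dist V E r x mod 4 = c}" .
  moreover have "card (L \<union> S) = card L + card S"
    using leaves_Int_support_vertices[OF assms] finite unfolding L_def S_def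
    by (intro card_Un_disjoint) auto
  moreover have "card A = card V - card (L \<union> S)"
    unfolding A_def using finite by (intro card_Diff_subset) auto
  moreover have "card (L \<union> S) \<le> card V" using finite finite_V by (intro card_mono)
  ultimately show ?thesis using c(2) unfolding L_def S_def by linarith
qed

lemma leaves_eq_if_card_eq_2:
  assumes "card V = 2"
  shows "leaves V E = V"
proof -
  have "degree E v = 1" if v: "v \<in> V" for v
  proof -
    have "{u. adj E v u} \<subseteq> V - {v}" using adj_vertices by blast
    then have "card {u. adj E v u} \<le> card (V - {v})" using finite_V by (intro card_mono) auto
    also have "\<dots> = 1" using v assms finite_V by simp
    finally have "card {u. adj E v u} \<le> 1" .
    moreover have "{u. adj E v u} \<noteq> {}" using exists_neighbour v by blast
    then have "card {u. adj E v u} \<noteq> 0" using finite_neighbours by simp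
    ultimately show ?thesis unfolding degree_def by linarith
  qed
  then show ?thesis unfolding leaves_def by blast
qed

lemma support_vertices_eq_if_card_eq_2:
  assumes "card V = 2"
  shows "support_vertices V E = V"
proof -
  have "v \<in> support_vertices V E" if "v \<in> V" for v
  proof -
    obtain u where "adj E v u" using exists_neighbour \<open>v \<in> V\<close> by blast
    then show ?thesis
      using leaves_eq_if_card_eq_2[OF assms] adj_vertices(2) \<open>v \<in> V\<close>
      unfolding support_vertices_def by blast
  qed
  then show ?thesis unfolding support_vertices_def by blast
qed

lemma disj_dom_number_le_1_if_card_eq_2:
  assumes "card V = 2"
  shows "disj_dom_number V E \<le> 1"
proof -
  obtain a b where V: "V = {a, b}" "a \<noteq> b" using card_2_iff[THEN iffD1, OF assms] by blast
  have "disj_dom_set V E {a}"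
    unfolding disj_dom_set_def
  proof (intro conjI ballI)
    fix v assume "v \<in> V - {a}"
    then have "v = b" using V by blast
    obtain u where "adj E v u" using exists_neighbour V \<open>v = b\<close> by blast
    then have "u = a" using adj_vertices[of v u] V \<open>v = b\<close> by blast
    then show "(\<exists>u\<in>{a}. adj E v u) \<or> 2 \<le> card {u \<in> {a}. dist V E v u = 2}"
      using \<open>adj E v u\<close> by blast
  qed (use V in auto)
  then show ?thesis using disj_dom_number_le_card[of V E "{a}"] by simp
qed

lemma four_disj_dom_number_le:
  "4 * disj_dom_number V E + card (leaves V E) \<le> card V + 3 * card (support_vertices V E)"
proof (cases "card V = 2")
  case True
  then show ?thesis
    using disj_dom_number_le_1_if_card_eq_2 leaves_eq_if_card_eq_2 support_vertices_eq_if_card_eq_2 by simp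
next
  case False
  then show ?thesis using four_disj_dom_number_le_if_3_le_card two_le_card by simp
qed

end

theorem corollary2p5:
  fixes V :: "'a set" and E :: "'a set set"
  assumes "tree V E" and "card V \<ge> 2"
  shows "real (disj_dom_number V E)
           \<le> (real (card V) + 3 * real (card (support_vertices V E)) - real (card (leaves V E))) / 4"
proof -
  interpret nontrivial_tree V E using assms by unfold_locales
  have "real (4 * disj_dom_number V E + card (leaves V E))
      \<le> real (card V + 3 * card (support_vertices V E))"
    using four_disj_dom_number_le by (rule of_nat_mono)
  then show ?thesis by simp
qed

end
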